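(* There is a constant $c>0$ such that for all integers $n\ge 2$ and $k\in\mathbb{N}$, the randomized query complexity of $TARSKI(n,k)$ is at least $ck$.
   Context: For $k,n\in\mathbb{N}$ let $\mathcal{L}_n^k=\{0,1,\ldots,n-1\}^k$ with the componentwise order. $TARSKI(n,k)$: given oracle access to an unknown monotone $f:\mathcal{L}_n^k\to\mathcal{L}_n^k$ (a query of $v$ returns $f(v)$), find $x$ with $f(x)=x$. The randomized query complexity is the minimum, over randomized algorithms that on every input output a fixed point with probability at least $9/10$, of the worst-case expected number of queries (expectation over the algorithm's coins). *)

theory Defs
  imports "HOL-Probability.Probability"
begin

definition grid :: "nat \<Rightarrow> nat \<Rightarrow> nat list set" where
  "grid n k = {x. length x = k \<and> (\<forall>i<k. x ! i < n)}"

definition cw_le :: "nat list \<Rightarrow> nat list \<Rightarrow> bool" where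
  "cw_le x y = list_all2 (\<le>) x y"

text \<open>Outside the grid
  the function is fixed to the canonical value [] (so it carries no information;
  this identifies functions on the grid with total functions).\<close>
definition tarski_input :: "nat \<Rightarrow> nat \<Rightarrow> (nat list \<Rightarrow> nat list) \<Rightarrow> bool" where
  "tarski_input n k f \<longleftrightarrow>
     (\<forall>x\<in>grid n k. f x \<in> grid n k) \<and>
     (\<forall>x\<in>grid n k. \<forall>y\<in>grid n k. cw_le x y \<longrightarrow> cw_le (f x) (f y)) \<and>
     (\<forall>x. x \<notin> grid n k \<longrightarrow> f x = [])"

text \<open>Deterministic adaptive query algorithms (decision trees): either output a
  point, or query a point and continue depending on the oracle's answer.\<close>
datatype qtree = Out "nat list" | Ask "nat list" "nat list \<Rightarrow> qtree"

primrec run :: "(nat list \<Rightarrow> nat list) \<Rightarrow> qtree \<Rightarrow> nat list \<times> nat" where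
  "run f (Out x) = (x, 0)"
| "run f (Ask v g) = (case run f (g (f v)) of (x, q) \<Rightarrow> (x, Suc q))"

text \<open>A randomized algorithm is a probability distribution over deterministic trees.\<close>
definition success_prob :: "nat \<Rightarrow> nat \<Rightarrow> qtree pmf \<Rightarrow> (nat list \<Rightarrow> nat list) \<Rightarrow> real" where
  "success_prob n k A f =
     measure_pmf.prob A {t. fst (run f t) \<in> grid n k \<and> f (fst (run f t)) = fst (run f t)}"

definition expected_queries :: "qtree pmf \<Rightarrow> (nat list \<Rightarrow> nat list) \<Rightarrow> ennreal" where
  "expected_queries A f = (\<integral>\<^sup>+ t. ennreal (real (snd (run f t))) \<partial>measure_pmf A)"

definition valid_alg :: "nat \<Rightarrow> nat \<Rightarrow> qtree pmf \<Rightarrow> bool" where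
  "valid_alg n k A \<longleftrightarrow> (\<forall>f. tarski_input n k f \<longrightarrow> success_prob n k A f \<ge> 9/10)"

definition rand_query_complexity :: "nat \<Rightarrow> nat \<Rightarrow> ennreal" where
  "rand_query_complexity n k =
     (INF A \<in> {A. valid_alg n k A}. SUP f \<in> {f. tarski_input n k f}. expected_queries A f)"

end

theory Submission
  imports Defs "HOL-Library.Sublist"
begin

(* For a secret s in {0,1}^k, deviation_map n s copies s up to and including the first
   coordinate where the query x deviates from s, and fills the remaining coordinates with the
   bottom or top value of the grid. This is a monotone self-map of the grid whose only fixed
   point is s, and a query reveals nothing about s beyond the first deviation.
   A potential argument shows that a deterministic tree making at most d queries, started with a
   prefix a of s already known, finds at most 4^d (3/2)^(k - |a|) of the candidate secrets. For
   d = (k - 1) div 5 this is at most 3/4 of all 2^k secrets, so by averaging every randomized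
   algorithm finds some secret s within d queries with probability at most 3/4. Being correct
   with probability 9/10, it must make more than d queries with probability at least 3/20 on
   that instance, hence at least (d + 1) 3/20 >= 3k/100 queries in expectation. *)

fun deviation_map :: "nat \<Rightarrow> nat list \<Rightarrow> nat list \<Rightarrow> nat list" where
  "deviation_map n (a # s) (b # x) =
     (if b = a then a # deviation_map n s x
      else if b < a then a # replicate (length s) 0
      else a # replicate (length s) (n - 1))"
| "deviation_map n _ _ = []"

lemma length_deviation_map: "length x = length s \<Longrightarrow> length (deviation_map n s x) = length s"
  by (induction n s x rule: deviation_map.induct) auto

lemma set_deviation_map: "set s \<subseteq> {..<n} \<Longrightarrow> set (deviation_map n s x) \<subseteq> {..<n}"
  by (induction n s x rule: deviation_map.induct) auto

lemma deviation_map_fixpoint: "deviation_map n s x = x \<Longrightarrow> length x = length s \<Longrightarrow> x = s"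
  by (induction n s x rule: deviation_map.induct) (auto split: if_splits)

lemma list_all2_le_replicate_0: "length ys = m \<Longrightarrow> list_all2 (\<le>) (replicate m (0::nat)) ys"
  by (auto simp: list_all2_conv_all_nth)

lemma list_all2_le_replicate_top:
  fixes xs :: "nat list"
  assumes "length xs = m" "set xs \<subseteq> {..<n}"
  shows "list_all2 (\<le>) xs (replicate m (n - 1))"
proof -
  have "xs ! i \<le> n - 1" if "i < m" for i
  proof -
    have "xs ! i < n" using that assms nth_mem[of i xs] by (auto simp: subset_eq)
    then show ?thesis by linarith
  qed
  then show ?thesis using assms by (simp add: list_all2_conv_all_nth)
qed

lemma deviation_map_mono:
  "list_all2 (\<le>) x y \<Longrightarrow> length x = length s \<Longrightarrow> set s \<subseteq> {..<n}
   \<Longrightarrow> list_all2 (\<le>) (deviation_map n s x) (deviation_map n s y)"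
proof (induction n s x arbitrary: y rule: deviation_map.induct)
  case (1 n a s b x)
  then obtain c y' where y: "y = c # y'" "b \<le> c" "list_all2 (\<le>) x y'"
    by (cases y) auto
  have len: "length x = length s" "length y' = length s"
    using 1 y by (auto dest: list_all2_lengthD)
  have s: "set s \<subseteq> {..<n}" using "1.prems" by simp
  have top: "list_all2 (\<le>) (deviation_map n s z) (replicate (length s) (n - 1))"
    if "length z = length s" for z
    using that s by (intro list_all2_le_replicate_top length_deviation_map set_deviation_map)
  consider (both_agree) "b = a" "c = a" | (only_x_agrees) "b = a" "a < c" | (x_below) "b < a"
    | (x_above) "a < b"
    using y(2) by linarith
  then show ?case
  proof cases
    case both_agree
    then have "list_all2 (\<le>) (deviation_map n s x) (deviation_map n s y')"
      using "1.IH" y(3) len(1) s by blast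
    then show ?thesis using both_agree y by simp
  next
    case only_x_agrees
    then show ?thesis using top len y by simp
  next
    case x_below
    have "length (deviation_map n (a # s) y) = Suc (length s)"
      using y len by (simp add: length_deviation_map)
    then obtain r where "deviation_map n (a # s) y = a # r" "length r = length s"
      using y by (cases "c = a"; cases "c < a") auto
    then show ?thesis using x_below by (simp add: list_all2_le_replicate_0)
  next
    case x_above
    then show ?thesis using y by (simp add: list_all2_refl)
  qed
qed simp_all

lemma deviation_map_eq_if_not_prefix:
  assumes "prefix a s" "prefix a s'" "\<not> prefix a v" "length s = length s'"
  shows "deviation_map n s v = deviation_map n s' v"
  using assms
proof (induction a arbitrary: s s' v)
  case (Cons c a)
  obtain t t' where s: "s = c # t" "s' = c # t'" "prefix a t" "prefix a t'"
    using Cons.prems(1,2) by (auto simp: prefix_def)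
  show ?case
  proof (cases v)
    case (Cons b w)
    show ?thesis
    proof (cases "b = c")
      case True
      then have "\<not> prefix a w" using Cons.prems(3) \<open>v = b # w\<close> by simp
      moreover have "length t = length t'" using Cons.prems(4) s by simp
      ultimately have "deviation_map n t w = deviation_map n t' w"
        using Cons.IH s(3,4) by blast
      then show ?thesis using s True \<open>v = b # w\<close> by simp
    qed (use s Cons.prems(4) \<open>v = b # w\<close> in simp)
  qed (simp add: s)
qed simp

definition deviation_oracle :: "nat \<Rightarrow> nat \<Rightarrow> nat list \<Rightarrow> nat list \<Rightarrow> nat list" where
  "deviation_oracle n k s x = (if x \<in> grid n k then deviation_map n s x else [])"

lemma grid_eq: "grid n k = {xs. set xs \<subseteq> {..<n} \<and> length xs = k}"
  unfolding grid_def by (fastforce simp: subset_eq in_set_conv_nth)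

lemma finite_grid: "finite (grid n k)"
  unfolding grid_eq by (rule finite_lists_length_eq) simp

lemma card_grid: "card (grid n k) = n ^ k"
  unfolding grid_eq by (subst card_lists_length_eq) simp_all

lemma grid_mono: "m \<le> n \<Longrightarrow> grid m k \<subseteq> grid n k"
  unfolding grid_eq by auto

lemma tarski_input_deviation_oracle:
  assumes "s \<in> grid n k"
  shows "tarski_input n k (deviation_oracle n k s)"
proof -
  have s: "set s \<subseteq> {..<n}" "length s = k" using assms unfolding grid_eq by auto
  have "deviation_map n s x \<in> grid n k" if "x \<in> grid n k" for x
    using that s length_deviation_map set_deviation_map unfolding grid_eq by auto
  moreover have "cw_le (deviation_map n s x) (deviation_map n s y)"
    if "x \<in> grid n k" "cw_le x y" for x y
    using that s deviation_map_mono unfolding grid_eq cw_le_def by auto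
  ultimately show ?thesis
    unfolding tarski_input_def deviation_oracle_def by auto
qed

lemma deviation_oracle_fixpoint:
  assumes "deviation_oracle n k s x = x" "x \<in> grid n k" "length s = k"
  shows "x = s"
proof (rule deviation_map_fixpoint)
  show "deviation_map n s x = x" using assms(1,2) by (simp add: deviation_oracle_def)
  show "length x = length s" using assms(2,3) by (simp add: grid_def)
qed

definition found_within :: "nat \<Rightarrow> nat \<Rightarrow> qtree \<Rightarrow> nat list \<Rightarrow> nat \<Rightarrow> nat list set" where
  "found_within n k t a d = {s \<in> grid 2 k. prefix a s \<and>
     fst (run (deviation_oracle n k s) t) = s \<and> snd (run (deviation_oracle n k s) t) \<le> d}"

lemma found_within_Ask_Suc_iff:
  "s \<in> found_within n k (Ask v g) a (Suc d) \<longleftrightarrow>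
   s \<in> found_within n k (g (deviation_oracle n k s v)) a d"
  by (simp add: found_within_def split: prod.splits)

lemma found_within_subset_if_long: "k \<le> length a \<Longrightarrow> found_within n k t a d \<subseteq> {a}"
  unfolding found_within_def grid_eq prefix_def by auto

lemma found_within_subset_extensions:
  assumes "length a < k"
  shows "found_within n k t a d \<subseteq> (\<Union>c<2. found_within n k t (a @ [c]) d)"
proof
  fix s assume s: "s \<in> found_within n k t a d"
  then have "length s = k" "prefix a s" "set s \<subseteq> {..<2}"
    unfolding found_within_def grid_eq by auto
  then have "prefix (a @ [s ! length a]) s" "s ! length a < 2"
    using assms take_Suc_conv_app_nth[of "length a" s] take_is_prefix[of "Suc (length a)" s]
    by (auto simp: prefix_def subset_eq)
  then show "s \<in> (\<Union>c<2. found_within n k t (a @ [c]) d)"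
    using s unfolding found_within_def by auto
qed

lemma finite_found_within: "finite (found_within n k t a d)"
  unfolding found_within_def using finite_grid by simp

lemma card_found_within_Ask_not_prefix:
  assumes IH: "\<And>y a. real (card (found_within n k (g y) a d)) \<le> 4 ^ d * (3/2) ^ (k - length a)"
    and "\<not> prefix a v"
  shows "real (card (found_within n k (Ask v g) a (Suc d))) \<le> 4 ^ d * (3/2) ^ (k - length a)"
proof -
  have "\<exists>y. found_within n k (Ask v g) a (Suc d) \<subseteq> found_within n k (g y) a d"
  proof (cases "found_within n k (Ask v g) a (Suc d) = {}")
    case False
    then obtain s0 where s0: "s0 \<in> found_within n k (Ask v g) a (Suc d)" by blast
    have "deviation_oracle n k s v = deviation_oracle n k s0 v"
      if "s \<in> found_within n k (Ask v g) a (Suc d)" for s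
      using that s0 deviation_map_eq_if_not_prefix[OF _ _ assms(2)]
      unfolding found_within_def deviation_oracle_def grid_eq by auto
    then show ?thesis by (metis found_within_Ask_Suc_iff subsetI)
  qed simp
  then obtain y where "found_within n k (Ask v g) a (Suc d) \<subseteq> found_within n k (g y) a d" ..
  then have "card (found_within n k (Ask v g) a (Suc d)) \<le> card (found_within n k (g y) a d)"
    by (rule card_mono[OF finite_found_within])
  then show ?thesis using IH[of y a] by linarith
qed

lemma card_found_within_Ask_le:
  assumes IH: "\<And>y a. real (card (found_within n k (g y) a d)) \<le> 4 ^ d * (3/2) ^ (k - length a)"
  shows "real (card (found_within n k (Ask v g) a (Suc d))) \<le> 4 ^ d * (4 * (3/2) ^ (k - length a) - 3)"
proof (induction "k - length a" arbitrary: a)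
  case 0
  then have "card (found_within n k (Ask v g) a (Suc d)) \<le> 1"
    using card_mono[OF _ found_within_subset_if_long] by fastforce
  then have "real (card (found_within n k (Ask v g) a (Suc d))) \<le> 1" by simp
  also have "\<dots> \<le> 4 ^ d * (4 * (3/2) ^ (k - length a) - 3)"
    using \<open>0 = k - length a\<close> by simp
  finally show ?case .
next
  case (Suc m)
  let ?F = "\<lambda>a. found_within n k (Ask v g) a (Suc d)"
  have m: "k - length (a @ [c]) = m" for c using Suc.hyps(2) by simp
  show ?case
  proof (cases "prefix a v")
    case False
    have "(1::real) \<le> (3/2) ^ (k - length a)" by simp
    then have "(4::real) ^ d * (3/2) ^ (k - length a) \<le> 4 ^ d * (4 * (3/2) ^ (k - length a) - 3)"
      by (intro mult_left_mono) simp_all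
    then show ?thesis using card_found_within_Ask_not_prefix[where g = g, OF IH False] by linarith
  next
    case True
    \<comment> \<open>Of the two extensions of a, only the one along v can leave the answer to v
      undetermined; this is what keeps the potential from doubling.\<close>
    define c where "c = (if v ! length a = 0 then 1 else 0 :: nat)"
    have "\<not> prefix (a @ [c]) v"
      using True by (auto simp: c_def prefix_def)
    then have cheap: "real (card (?F (a @ [c]))) \<le> 4 ^ d * (3/2) ^ m"
      using card_found_within_Ask_not_prefix[where g = g, OF IH] m by metis
    have other: "real (card (?F (a @ [1 - c]))) \<le> 4 ^ d * (4 * (3/2) ^ m - 3)"
      using Suc.hyps(1)[of "a @ [1 - c]"] m by simp
    have "{..<2} = {c, 1 - c}" by (auto simp: c_def)
    then have "?F a \<subseteq> ?F (a @ [c]) \<union> ?F (a @ [1 - c])"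
      using found_within_subset_extensions[of a k] Suc.hyps(2) by auto
    then have "card (?F a) \<le> card (?F (a @ [c])) + card (?F (a @ [1 - c]))"
      by (meson card_Un_le card_mono finite_UnI finite_found_within order_trans)
    then have "real (card (?F a)) \<le> 4 ^ d * (5 * (3/2) ^ m - 3)"
      using cheap other by (simp add: algebra_simps)
    also have "\<dots> \<le> 4 ^ d * (4 * (3/2) ^ (k - length a) - 3)"
      using Suc.hyps(2)[symmetric] by simp
    finally show ?thesis .
  qed
qed

theorem card_found_within_le:
  "real (card (found_within n k t a d)) \<le> 4 ^ d * (3/2) ^ (k - length a)"
proof (induction t arbitrary: a d)
  case (Out x)
  have "found_within n k (Out x) a d \<subseteq> {x}" by (auto simp: found_within_def)
  then have "card (found_within n k (Out x) a d) \<le> 1"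
    using card_mono[of "{x}"] by fastforce
  moreover have "(1::real) \<le> 4 ^ d * (3/2) ^ (k - length a)"
    using mult_mono[of 1 "4 ^ d :: real" 1 "(3/2) ^ (k - length a)"] by simp
  ultimately show ?case by linarith
next
  case (Ask v g)
  show ?case
  proof (cases d)
    case 0
    then show ?thesis by (simp add: found_within_def case_prod_beta)
  next
    case (Suc d')
    have "real (card (found_within n k (Ask v g) a d)) \<le> 4 ^ d' * (4 * (3/2) ^ (k - length a) - 3)"
      unfolding Suc by (rule card_found_within_Ask_le) (rule Ask.IH, simp)
    also have "\<dots> \<le> 4 ^ d * (3/2) ^ (k - length a)" by (simp add: Suc)
    finally show ?thesis .
  qed
qed

lemma measure_pmf_exists_prob_le_average:
  fixes p :: "'a pmf" and E :: "'b \<Rightarrow> 'a set"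
  assumes "finite B" "B \<noteq> {}" and card_le: "\<And>x. real (card {b \<in> B. x \<in> E b}) \<le> c"
  shows "\<exists>b\<in>B. measure_pmf.prob p (E b) \<le> c / card B"
proof (rule ccontr)
  assume "\<not> ?thesis"
  then have "(\<Sum>b\<in>B. c / card B) < (\<Sum>b\<in>B. measure_pmf.prob p (E b))"
    using assms(1,2) by (intro sum_strict_mono) auto
  also have "\<dots> = measure_pmf.expectation p (\<lambda>x. \<Sum>b\<in>B. indicator (E b) x)"
    by (subst Bochner_Integration.integral_sum) (auto intro: measure_pmf.integrable_const_bound[where B = 1])
  also have "\<dots> \<le> c"
  proof (rule measure_pmf.integral_le_const)
    have "(\<Sum>b\<in>B. indicator (E b) x :: real) = real (card {b \<in> B. x \<in> E b})" for x
      using assms(1) by (simp add: indicator_def sum.If_cases Int_def)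
    then show "AE x in measure_pmf p. (\<Sum>b\<in>B. indicator (E b) x) \<le> c"
      using card_le by simp
    show "integrable (measure_pmf p) (\<lambda>x. \<Sum>b\<in>B. indicator (E b) x :: real)"
      by (intro Bochner_Integration.integrable_sum measure_pmf.integrable_const_bound[where B = 1]) auto
  qed
  finally show False using assms(1,2) by simp
qed

lemma expected_queries_ge_tail:
  "ennreal (real (Suc d) * measure_pmf.prob A {t. d < snd (run f t)}) \<le> expected_queries A f"
proof -
  let ?Q = "{t. d < snd (run f t)}"
  have "ennreal (real (Suc d) * measure_pmf.prob A ?Q) =
      (\<integral>\<^sup>+t. ennreal (real (Suc d)) * indicator ?Q t \<partial>measure_pmf A)"
    by (simp add: nn_integral_cmult_indicator measure_pmf.emeasure_eq_measure ennreal_mult)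
  also have "\<dots> \<le> (\<integral>\<^sup>+t. ennreal (real (snd (run f t))) \<partial>measure_pmf A)"
    by (intro nn_integral_mono) (auto simp del: of_nat_Suc simp: indicator_def intro!: ennreal_leI)
  finally show ?thesis by (simp add: expected_queries_def)
qed

lemma success_prob_deviation_oracle_le:
  assumes "s \<in> grid 2 k"
  shows "success_prob n k A (deviation_oracle n k s) \<le>
    measure_pmf.prob A {t. s \<in> found_within n k t [] d} +
    measure_pmf.prob A {t. d < snd (run (deviation_oracle n k s) t)}"
proof -
  let ?f = "deviation_oracle n k s"
  have "length s = k" using assms by (simp add: grid_def)
  have "t \<in> {t. s \<in> found_within n k t [] d} \<union> {t. d < snd (run ?f t)}"
    if "fst (run ?f t) \<in> grid n k" "?f (fst (run ?f t)) = fst (run ?f t)" for t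
  proof -
    have "fst (run ?f t) = s"
      using deviation_oracle_fixpoint[OF that(2,1) \<open>length s = k\<close>] .
    then show ?thesis using assms by (auto simp: found_within_def)
  qed
  then have "{t. fst (run ?f t) \<in> grid n k \<and> ?f (fst (run ?f t)) = fst (run ?f t)} \<subseteq>
      {t. s \<in> found_within n k t [] d} \<union> {t. d < snd (run ?f t)}"
    by blast
  then have "success_prob n k A ?f \<le>
      measure_pmf.prob A ({t. s \<in> found_within n k t [] d} \<union> {t. d < snd (run ?f t)})"
    unfolding success_prob_def by (rule measure_pmf.finite_measure_mono) simp
  also have "\<dots> \<le> measure_pmf.prob A {t. s \<in> found_within n k t [] d} +
      measure_pmf.prob A {t. d < snd (run ?f t)}"
    by (rule measure_Un_le) simp_all
  finally show ?thesis .
qed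

lemma four_pow_mult_le:
  assumes "5 * d < k"
  shows "(4::real) ^ d * (3/2) ^ k \<le> 3/4 * 2 ^ k"
proof -
  obtain m where k: "k = Suc m" and "5 * d \<le> m" using assms by (cases k) auto
  have "(4::real) ^ d \<le> ((4/3) ^ 5) ^ d" by (intro power_mono) (simp_all add: power_divide)
  also have "\<dots> = (4/3) ^ (5 * d)" by (simp add: power_mult)
  also have "\<dots> \<le> (4/3) ^ m" using \<open>5 * d \<le> m\<close> by (intro power_increasing) simp_all
  finally have "(4::real) ^ d * (3/2) ^ k \<le> (4/3) ^ m * (3/2) ^ k"
    by (intro mult_right_mono) simp_all
  also have "\<dots> = 3/4 * 2 ^ k"
    unfolding k by (simp add: power_mult_distrib[symmetric])
  finally show ?thesis .
qed

lemma exists_secret_rarely_found: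
  assumes "5 * d < k"
  shows "\<exists>s\<in>grid 2 k. measure_pmf.prob A {t. s \<in> found_within n k t [] d} \<le> 3/4"
proof -
  have card: "card (grid 2 k) = 2 ^ k" by (simp add: card_grid)
  then have "grid 2 k \<noteq> {}" by auto
  have "{s \<in> grid 2 k. t \<in> {t. s \<in> found_within n k t [] d}} = found_within n k t [] d" for t
    by (auto simp: found_within_def)
  then have "real (card {s \<in> grid 2 k. t \<in> {t. s \<in> found_within n k t [] d}}) \<le> 4 ^ d * (3/2) ^ k"
    for t using card_found_within_le[of n k t "[]" d] by simp
  then obtain s where "s \<in> grid 2 k"
    and "measure_pmf.prob A {t. s \<in> found_within n k t [] d} \<le> 4 ^ d * (3/2) ^ k / card (grid 2 k)"
    using measure_pmf_exists_prob_le_average[where p = A and E = "\<lambda>s. {t. s \<in> found_within n k t [] d}",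
        OF finite_grid \<open>grid 2 k \<noteq> {}\<close>] by blast
  moreover have "4 ^ d * (3/2) ^ k / card (grid 2 k) \<le> (3/4 :: real)"
    using four_pow_mult_le[OF assms] card by (simp add: divide_le_eq)
  ultimately show ?thesis by (meson order_trans)
qed

lemma valid_alg_expected_queries_ge:
  assumes "valid_alg n k A" "2 \<le> n" "0 < k"
  shows "\<exists>f. tarski_input n k f \<and> ennreal (3/100 * real k) \<le> expected_queries A f"
proof -
  define d where "d = (k - 1) div 5"
  have "5 * d < k" "k \<le> 5 * Suc d" using assms(3) by (simp_all add: d_def)
  then obtain s where s: "s \<in> grid 2 k"
    and rare: "measure_pmf.prob A {t. s \<in> found_within n k t [] d} \<le> 3/4"
    using exists_secret_rarely_found by blast
  let ?f = "deviation_oracle n k s"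
  have input: "tarski_input n k ?f"
    using tarski_input_deviation_oracle grid_mono[OF assms(2)] s by blast
  then have "9/10 \<le> success_prob n k A ?f" using assms(1) by (simp add: valid_alg_def)
  then have tail: "3/20 \<le> measure_pmf.prob A {t. d < snd (run ?f t)}"
    using success_prob_deviation_oracle_le[OF s, of n A d] rare by linarith
  have "3/100 * real k \<le> real (Suc d) * (3/20)"
    using \<open>k \<le> 5 * Suc d\<close> by simp
  also have "\<dots> \<le> real (Suc d) * measure_pmf.prob A {t. d < snd (run ?f t)}"
    using tail by (intro mult_left_mono) simp_all
  finally have "ennreal (3/100 * real k) \<le> ennreal (real (Suc d) * measure_pmf.prob A {t. d < snd (run ?f t)})"
    by (rule ennreal_leI)
  also have "\<dots> \<le> expected_queries A ?f" by (rule expected_queries_ge_tail)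
  finally show ?thesis using input by blast
qed

theorem corollary8:
  shows "\<exists>c::real. c > 0 \<and>
    (\<forall>n k::nat. n \<ge> 2 \<longrightarrow> rand_query_complexity n k \<ge> ennreal (c * real k))"
proof (intro exI[of _ "3/100"] conjI allI impI)
  fix n k :: nat
  assume "2 \<le> n"
  show "ennreal (3/100 * real k) \<le> rand_query_complexity n k"
  proof (cases "k = 0")
    case False
    show ?thesis unfolding rand_query_complexity_def
    proof (rule INF_greatest)
      fix A assume "A \<in> {A. valid_alg n k A}"
      then obtain f where "tarski_input n k f" "ennreal (3/100 * real k) \<le> expected_queries A f"
        using valid_alg_expected_queries_ge \<open>2 \<le> n\<close> False by blast
      then show "ennreal (3/100 * real k) \<le> (SUP f\<in>{f. tarski_input n k f}. expected_queries A f)"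
        by (blast intro: SUP_upper2)
    qed
  qed simp
qed simp

end
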